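(* Let $\lambda$ be a partition of $n$ and $\lambda'$ its conjugate partition. Then for every integer $m$, $$|\mathrm{QYT}_{=m}(\lambda)|=|\mathrm{QYT}_{=(n+1)-m}(\lambda')|.$$
   Context: A partition $\lambda=(\lambda_1\ge\cdots\ge\lambda_k>0)$ of $n$ has (French) Young diagram with $\lambda_j$ left-justified boxes in row $j$, rows numbered from bottom to top; the conjugate partition $\lambda'$ is the partition whose diagram is obtained by reflecting that of $\lambda$ across the main diagonal (so $\lambda'_i$ is the number of boxes in column $i$ of $\lambda$). A semistandard Young tableau (SSYT) of shape $\lambda$ is a filling of the boxes with positive integers weakly increasing left to right along rows and strictly increasing bottom to top along columns. An SSYT $T$ is quasi-Yamanouchi if for every integer $i>1$ appearing in $T$, the leftmost occurrence of $i$ lies in a column weakly left of (column index $\le$) some occurrence of $i-1$. $\mathrm{QYT}_{=m}(\lambda)$ is the set of quasi-Yamanouchi tableaux of shape $\lambda$ whose largest entry is exactly $m$. *)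

theory Defs
  imports Main
begin

definition is_partition :: "nat list \<Rightarrow> bool" where
  "is_partition lam \<longleftrightarrow> sorted_wrt (\<ge>) lam \<and> (\<forall>x\<in>set lam. 0 < x)"

definition partition_of :: "nat list \<Rightarrow> nat \<Rightarrow> bool" where
  "partition_of lam n \<longleftrightarrow> is_partition lam \<and> sum_list lam = n"

definition conj_part :: "nat list \<Rightarrow> nat list" where
  "conj_part lam = map (\<lambda>i. length (filter (\<lambda>x. i \<le> x) lam)) [1..<Suc (fold max lam 0)]"

text \<open>Young diagram (French convention), 1-based cells (column, row):
  row j (from the bottom) contains the columns 1..lambda_j.\<close>
definition diagram :: "nat list \<Rightarrow> (nat \<times> nat) set" where
  "diagram lam = {(i, j). 1 \<le> j \<and> j \<le> length lam \<and> 1 \<le> i \<and> i \<le> lam ! (j - 1)}"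

definition is_SSYT :: "nat list \<Rightarrow> (nat \<times> nat \<Rightarrow> nat) \<Rightarrow> bool" where
  "is_SSYT lam T \<longleftrightarrow>
     (\<forall>c. c \<notin> diagram lam \<longrightarrow> T c = 0) \<and>
     (\<forall>c\<in>diagram lam. 0 < T c) \<and>
     (\<forall>i i' j. (i, j) \<in> diagram lam \<longrightarrow> (i', j) \<in> diagram lam \<longrightarrow> i \<le> i' \<longrightarrow> T (i, j) \<le> T (i', j)) \<and>
     (\<forall>i j j'. (i, j) \<in> diagram lam \<longrightarrow> (i, j') \<in> diagram lam \<longrightarrow> j < j' \<longrightarrow> T (i, j) < T (i, j'))"

definition leftmost_col :: "nat list \<Rightarrow> (nat \<times> nat \<Rightarrow> nat) \<Rightarrow> nat \<Rightarrow> nat" where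
  "leftmost_col lam T k = Min {i. \<exists>j. (i, j) \<in> diagram lam \<and> T (i, j) = k}"

definition quasi_yamanouchi :: "nat list \<Rightarrow> (nat \<times> nat \<Rightarrow> nat) \<Rightarrow> bool" where
  "quasi_yamanouchi lam T \<longleftrightarrow> is_SSYT lam T \<and>
     (\<forall>k\<in>T ` diagram lam. 1 < k \<longrightarrow>
        (\<exists>(i', j')\<in>diagram lam. T (i', j') = k - 1 \<and> leftmost_col lam T k \<le> i'))"

definition QYT_eq :: "int \<Rightarrow> nat list \<Rightarrow> (nat \<times> nat \<Rightarrow> nat) set" where
  "QYT_eq m lam = {T. quasi_yamanouchi lam T \<and>
      (\<exists>c\<in>diagram lam. int (T c) = m) \<and> (\<forall>c\<in>diagram lam. int (T c) \<le> m)}"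

end

theory Submission
  imports Defs "HOL-Library.Product_Lexorder"
begin

text \<open>
  Standardizing a quasi-Yamanouchi tableau \<open>T\<close> (numbering its cells by increasing entry,
  ties broken from left to right) gives a standard tableau \<open>S\<close>, and \<open>T\<close> is recovered
  from \<open>S\<close> alone: the cell carrying \<open>v\<close> has entry one plus the number of descents
  \<open>d < v\<close> of \<open>S\<close>, where \<open>d\<close> is a descent if \<open>d + 1\<close> lies weakly left of \<open>d\<close>.
  So \<open>QYT\<^sub>=\<^sub>m(\<lambda>)\<close> is in bijection with the standard tableaux of shape \<open>\<lambda>\<close> having
  \<open>m - 1\<close> descents. In a standard tableau \<open>d + 1\<close> lies weakly left of \<open>d\<close> exactly
  when it lies strictly above it, so transposition exchanges descents and non-descents
  and turns \<open>k\<close> descents on \<open>\<lambda>\<close> into \<open>n - 1 - k\<close> descents on \<open>\<lambda>'\<close>.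
\<close>

section \<open>Young diagrams as shapes\<close>

lemma le_fold_max: "x \<in> set xs \<Longrightarrow> x \<le> fold max xs (0::nat)"
  by (metis Max.set_eq_fold Max_ge finite_set list.set_intros(2))

locale young_shape =
  fixes D :: "(nat \<times> nat) set"
  assumes finite_shape: "finite D"
    and shape_pos: "(i, j) \<in> D \<Longrightarrow> 1 \<le> i \<and> 1 \<le> j"
    and shape_down_closed:
      "(i, j) \<in> D \<Longrightarrow> 1 \<le> i' \<Longrightarrow> 1 \<le> j' \<Longrightarrow> i' \<le> i \<Longrightarrow> j' \<le> j \<Longrightarrow> (i', j') \<in> D"

lemma (in young_shape) young_shape_transpose: "young_shape (prod.swap ` D)"
  by unfold_locales (auto simp: finite_shape dest: shape_pos intro: shape_down_closed)

lemma diagram_Nil [simp]: "diagram [] = {}"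
  by (simp add: diagram_def)

lemma diagram_Cons:
  "diagram (x # xs) = (\<lambda>i. (i, 1)) ` {1..x} \<union> (\<lambda>(i, j). (i, Suc j)) ` diagram xs"
proof (rule set_eqI)
  fix c :: "nat \<times> nat"
  obtain i j where c: "c = (i, j)" by fastforce
  show "c \<in> diagram (x # xs) \<longleftrightarrow> c \<in> (\<lambda>i. (i, 1)) ` {1..x} \<union> (\<lambda>(i, j). (i, Suc j)) ` diagram xs"
  proof (cases j)
    case (Suc k)
    then show ?thesis using c by (cases k) (auto simp: diagram_def image_iff)
  qed (auto simp: c diagram_def)
qed

lemma finite_diagram: "finite (diagram lam)"
  by (induction lam) (simp_all add: diagram_Cons)

lemma card_diagram: "card (diagram lam) = sum_list lam"
proof (induction lam)
  case (Cons x xs)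
  have "card ((\<lambda>i. (i, 1::nat)) ` {1..x}) = x"
    by (simp add: card_image inj_on_def)
  moreover have "card ((\<lambda>(i, j). (i, Suc j)) ` diagram xs) = card (diagram xs)"
    by (rule card_image) (auto simp: inj_on_def)
  moreover have "(\<lambda>i. (i, 1)) ` {1..x} \<inter> (\<lambda>(i, j). (i, Suc j)) ` diagram xs = {}"
    by (auto simp: diagram_def)
  ultimately show ?case
    using Cons finite_diagram[of xs] by (simp add: diagram_Cons card_Un_disjoint)
qed simp

lemma young_shape_diagram:
  assumes "is_partition lam"
  shows "young_shape (diagram lam)"
proof
  show "finite (diagram lam)" by (rule finite_diagram)
  fix i j i' j'
  assume ij: "(i, j) \<in> diagram lam" and "1 \<le> i'" "1 \<le> j'" "i' \<le> i" "j' \<le> j"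
  then have "1 \<le> j" "j \<le> length lam" "i \<le> lam ! (j - 1)"
    by (auto simp: diagram_def)
  moreover have "lam ! (j - 1) \<le> lam ! (j' - 1)"
    using assms \<open>1 \<le> j'\<close> \<open>j' \<le> j\<close> \<open>j \<le> length lam\<close>
    by (cases "j' = j") (auto simp: is_partition_def sorted_wrt_iff_nth_less)
  ultimately show "(i', j') \<in> diagram lam"
    using \<open>1 \<le> i'\<close> \<open>1 \<le> j'\<close> \<open>i' \<le> i\<close> \<open>j' \<le> j\<close> by (auto simp: diagram_def)
next
  fix i j
  show "(i, j) \<in> diagram lam \<Longrightarrow> 1 \<le> i \<and> 1 \<le> j" by (simp add: diagram_def)
qed

lemma le_length_filter_iff:
  assumes "sorted_wrt (\<ge>) (lam::nat list)" "1 \<le> i"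
  shows "i \<le> length (filter (\<lambda>x. j \<le> x) lam) \<longleftrightarrow> i \<le> length lam \<and> j \<le> lam ! (i - 1)"
  using assms
proof (induction lam arbitrary: i)
  case (Cons x xs)
  show ?case
  proof (cases "j \<le> x")
    case True
    show ?thesis
    proof (cases "i = 1")
      case False
      with Cons.prems have "1 \<le> i - 1" by simp
      with Cons.IH[of "i - 1"] Cons.prems(1) True False show ?thesis by (cases i) auto
    qed (use True in simp)
  next
    case False
    then have "filter (\<lambda>x. j \<le> x) xs = []" "i \<le> length (x # xs) \<Longrightarrow> (x # xs) ! (i - 1) \<le> x"
      using Cons.prems by (auto simp: filter_empty_conv nth_Cons' split: if_splits)
    then show ?thesis using False Cons.prems(2) by auto
  qed
qed simp

lemma diagram_conj_part:
  assumes "is_partition lam"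
  shows "diagram (conj_part lam) = prod.swap ` diagram lam"
proof -
  have sorted: "sorted_wrt (\<ge>) lam" using assms by (simp add: is_partition_def)
  have "(i, j) \<in> diagram (conj_part lam) \<longleftrightarrow> (j, i) \<in> diagram lam" for i j
  proof -
    have "1 \<le> j \<Longrightarrow> j \<le> fold max lam 0 \<Longrightarrow>
        conj_part lam ! (j - 1) = length (filter (\<lambda>x. j \<le> x) lam)"
      unfolding conj_part_def by (subst nth_map) (auto simp del: upt_Suc)
    then have "(i, j) \<in> diagram (conj_part lam) \<longleftrightarrow>
        1 \<le> j \<and> j \<le> fold max lam 0 \<and> 1 \<le> i \<and> i \<le> length (filter (\<lambda>x. j \<le> x) lam)"
      by (auto simp: diagram_def conj_part_def)
    moreover have "i \<le> length lam \<Longrightarrow> 1 \<le> i \<Longrightarrow> lam ! (i - 1) \<le> fold max lam 0"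
      by (simp add: le_fold_max)
    ultimately show ?thesis
      using le_length_filter_iff[OF sorted, of i j] by (auto simp: diagram_def)
  qed
  then show ?thesis by auto
qed

section \<open>Tableaux on shapes\<close>

text \<open>The notions of \<open>Defs\<close>, for an arbitrary set of cells in place of a diagram.\<close>


definition ssyt :: "(nat \<times> nat) set \<Rightarrow> (nat \<times> nat \<Rightarrow> nat) \<Rightarrow> bool" where
  "ssyt D T \<longleftrightarrow>
     (\<forall>c. c \<notin> D \<longrightarrow> T c = 0) \<and>
     (\<forall>c\<in>D. 0 < T c) \<and>
     (\<forall>i i' j. (i, j) \<in> D \<longrightarrow> (i', j) \<in> D \<longrightarrow> i \<le> i' \<longrightarrow> T (i, j) \<le> T (i', j)) \<and>
     (\<forall>i j j'. (i, j) \<in> D \<longrightarrow> (i, j') \<in> D \<longrightarrow> j < j' \<longrightarrow> T (i, j) < T (i, j'))"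

definition leftmost_column :: "(nat \<times> nat) set \<Rightarrow> (nat \<times> nat \<Rightarrow> nat) \<Rightarrow> nat \<Rightarrow> nat" where
  "leftmost_column D T k = Min {i. \<exists>j. (i, j) \<in> D \<and> T (i, j) = k}"

definition quasi_yamanouchi_on :: "(nat \<times> nat) set \<Rightarrow> (nat \<times> nat \<Rightarrow> nat) \<Rightarrow> bool" where
  "quasi_yamanouchi_on D T \<longleftrightarrow> ssyt D T \<and>
     (\<forall>k\<in>T ` D. 1 < k \<longrightarrow>
        (\<exists>(i', j')\<in>D. T (i', j') = k - 1 \<and> leftmost_column D T k \<le> i'))"

definition QYT :: "(nat \<times> nat) set \<Rightarrow> int \<Rightarrow> (nat \<times> nat \<Rightarrow> nat) set" where
  "QYT D m = {T. quasi_yamanouchi_on D T \<and>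
      (\<exists>c\<in>D. int (T c) = m) \<and> (\<forall>c\<in>D. int (T c) \<le> m)}"

lemma QYT_eq_eq_QYT_diagram: "QYT_eq m lam = QYT (diagram lam) m"
  unfolding QYT_eq_def QYT_def quasi_yamanouchi_def quasi_yamanouchi_on_def
    is_SSYT_def ssyt_def leftmost_col_def leftmost_column_def
  by simp

lemma leftmost_column_le:
  assumes "finite D" "(i, j) \<in> D" "T (i, j) = k"
  shows "leftmost_column D T k \<le> i"
proof -
  have "{i. \<exists>j. (i, j) \<in> D \<and> T (i, j) = k} \<subseteq> fst ` D" by force
  then have "finite {i. \<exists>j. (i, j) \<in> D \<and> T (i, j) = k}"
    using assms(1) by (rule finite_subset[OF _ finite_imageI])
  then show ?thesis
    unfolding leftmost_column_def using assms(2,3) by (intro Min_le) auto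
qed

lemma le_leftmost_column:
  assumes "finite D" "(i, j) \<in> D" "T (i, j) = k"
    and "\<And>i' j'. (i', j') \<in> D \<Longrightarrow> T (i', j') = k \<Longrightarrow> a \<le> i'"
  shows "a \<le> leftmost_column D T k"
proof -
  have "{i. \<exists>j. (i, j) \<in> D \<and> T (i, j) = k} \<subseteq> fst ` D" by force
  then have "finite {i. \<exists>j. (i, j) \<in> D \<and> T (i, j) = k}"
    using assms(1) by (rule finite_subset[OF _ finite_imageI])
  then show ?thesis
    unfolding leftmost_column_def using assms(2-4) by (intro Min.boundedI) auto
qed

lemma ssytI:
  assumes "\<And>c. c \<notin> D \<Longrightarrow> T c = 0" and "\<And>c. c \<in> D \<Longrightarrow> 0 < T c"
    and "\<And>i i' j. (i, j) \<in> D \<Longrightarrow> (i', j) \<in> D \<Longrightarrow> i \<le> i' \<Longrightarrow> T (i, j) \<le> T (i', j)"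
    and "\<And>i j j'. (i, j) \<in> D \<Longrightarrow> (i, j') \<in> D \<Longrightarrow> j < j' \<Longrightarrow> T (i, j) < T (i, j')"
  shows "ssyt D T"
  using assms unfolding ssyt_def by blast

definition syt :: "(nat \<times> nat) set \<Rightarrow> (nat \<times> nat \<Rightarrow> nat) \<Rightarrow> bool" where
  "syt D S \<longleftrightarrow> ssyt D S \<and> S ` D = {1..card D}"

definition cell_of :: "(nat \<times> nat) set \<Rightarrow> (nat \<times> nat \<Rightarrow> nat) \<Rightarrow> nat \<Rightarrow> nat \<times> nat" where
  "cell_of D S v = inv_into D S v"

text \<open>For standard tableaux, \<open>d + 1\<close> weakly left of \<open>d\<close> is equivalent to the usual
  \<open>d + 1\<close> strictly above \<open>d\<close> (\<open>descent_iff_row_less\<close>), but matches the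
  quasi-Yamanouchi condition directly.\<close>

definition descents :: "(nat \<times> nat) set \<Rightarrow> (nat \<times> nat \<Rightarrow> nat) \<Rightarrow> nat set" where
  "descents D S = {d. 1 \<le> d \<and> d < card D \<and> fst (cell_of D S (Suc d)) \<le> fst (cell_of D S d)}"

section \<open>Standardization and destandardization\<close>

definition rank :: "('a \<Rightarrow> 'b::linorder) \<Rightarrow> 'a set \<Rightarrow> 'a \<Rightarrow> nat" where
  "rank f A x = card {z \<in> A. f z \<le> f x}"

lemma rank_less_rank:
  assumes "finite A" "x \<in> A" "y \<in> A" "f x < f y"
  shows "rank f A x < rank f A y"
  unfolding rank_def
proof (rule psubset_card_mono)
  have "y \<notin> {z \<in> A. f z \<le> f x}" "y \<in> {z \<in> A. f z \<le> f y}"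
    using assms by auto
  then show "{z \<in> A. f z \<le> f x} \<subset> {z \<in> A. f z \<le> f y}"
    using assms by auto
qed (use assms in simp)

lemma rank_le_rank_iff:
  assumes "finite A" "x \<in> A" "y \<in> A"
  shows "rank f A x \<le> rank f A y \<longleftrightarrow> f x \<le> f y"
proof
  show "f x \<le> f y \<Longrightarrow> rank f A x \<le> rank f A y"
    unfolding rank_def using assms by (intro card_mono) auto
  show "rank f A x \<le> rank f A y \<Longrightarrow> f x \<le> f y"
    using rank_less_rank[OF assms(1,3,2), of f] by (meson not_le)
qed

lemma rank_less_rank_iff:
  assumes "finite A" "x \<in> A" "y \<in> A"
  shows "rank f A x < rank f A y \<longleftrightarrow> f x < f y"
  using rank_le_rank_iff[OF assms(1,3,2)] by (simp add: not_le[symmetric])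

lemma bij_betw_rank:
  assumes "finite A" "inj_on f A"
  shows "bij_betw (rank f A) A {1..card A}"
proof -
  have inj: "inj_on (rank f A) A"
  proof (rule inj_onI)
    fix x y assume "x \<in> A" "y \<in> A" "rank f A x = rank f A y"
    then have "f x = f y"
      using rank_le_rank_iff[OF assms(1), of x y f] rank_le_rank_iff[OF assms(1), of y x f] by simp
    then show "x = y" using assms(2) \<open>x \<in> A\<close> \<open>y \<in> A\<close> by (simp add: inj_on_eq_iff)
  qed
  moreover have "rank f A ` A \<subseteq> {1..card A}"
    using assms(1) by (auto simp: rank_def Suc_le_eq card_gt_0_iff intro: card_mono)
  moreover have "card (rank f A ` A) = card {1..card A}"
    using inj by (simp add: card_image)
  ultimately show ?thesis
    by (simp add: bij_betw_def card_subset_eq)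
qed

definition destandardize :: "(nat \<times> nat) set \<Rightarrow> (nat \<times> nat \<Rightarrow> nat) \<Rightarrow> nat \<times> nat \<Rightarrow> nat" where
  "destandardize D S c = (if c \<in> D then Suc (card {d \<in> descents D S. d < S c}) else 0)"

definition std_key :: "(nat \<times> nat \<Rightarrow> nat) \<Rightarrow> nat \<times> nat \<Rightarrow> nat \<times> nat" where
  "std_key T c = (T c, fst c)"

definition standardize :: "(nat \<times> nat) set \<Rightarrow> (nat \<times> nat \<Rightarrow> nat) \<Rightarrow> nat \<times> nat \<Rightarrow> nat" where
  "standardize D T c = (if c \<in> D then rank (std_key T) D c else 0)"

locale standard_tableau = young_shape +
  fixes S :: "nat \<times> nat \<Rightarrow> nat"
  assumes syt: "syt D S"

lemma (in young_shape) standard_tableauI: "syt D S \<Longrightarrow> standard_tableau D S"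
  by (simp add: standard_tableau_def standard_tableau_axioms_def young_shape_axioms)

context standard_tableau
begin

lemma image_S: "S ` D = {1..card D}"
  using syt by (simp add: syt_def)

lemma inj_on_S: "inj_on S D"
  using image_S finite_shape by (intro eq_card_imp_inj_on) simp_all

lemma S_range: "c \<in> D \<Longrightarrow> 1 \<le> S c \<and> S c \<le> card D"
  using image_S by auto

lemma S_outside: "c \<notin> D \<Longrightarrow> S c = 0"
  using syt unfolding syt_def ssyt_def by blast

lemma S_row_le: "(i, j) \<in> D \<Longrightarrow> (i', j) \<in> D \<Longrightarrow> i \<le> i' \<Longrightarrow> S (i, j) \<le> S (i', j)"
  using syt by (simp add: syt_def ssyt_def)

lemma S_col_less: "(i, j) \<in> D \<Longrightarrow> (i, j') \<in> D \<Longrightarrow> j < j' \<Longrightarrow> S (i, j) < S (i, j')"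
  using syt by (simp add: syt_def ssyt_def)

lemma S_row_less: "(i, j) \<in> D \<Longrightarrow> (i', j) \<in> D \<Longrightarrow> i < i' \<Longrightarrow> S (i, j) < S (i', j)"
proof -
  assume "(i, j) \<in> D" "(i', j) \<in> D" "i < i'"
  then have "S (i, j) \<noteq> S (i', j)"
    using inj_on_S by (auto simp: inj_on_eq_iff)
  with S_row_le[OF \<open>(i, j) \<in> D\<close> \<open>(i', j) \<in> D\<close>] \<open>i < i'\<close> show ?thesis by simp
qed

lemma cell_of_mem: "1 \<le> v \<Longrightarrow> v \<le> card D \<Longrightarrow> cell_of D S v \<in> D"
  using image_S by (auto simp: cell_of_def intro: inv_into_into)

lemma S_cell_of: "1 \<le> v \<Longrightarrow> v \<le> card D \<Longrightarrow> S (cell_of D S v) = v"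
  using image_S by (auto simp: cell_of_def intro: f_inv_into_f)

lemma cell_of_S: "c \<in> D \<Longrightarrow> cell_of D S (S c) = c"
  using inj_on_S by (simp add: cell_of_def)

lemma rank_S: "c \<in> D \<Longrightarrow> rank S D c = S c"
proof -
  assume "c \<in> D"
  have "S ` {c' \<in> D. S c' \<le> S c} = {1..S c}"
  proof
    show "S ` {c' \<in> D. S c' \<le> S c} \<subseteq> {1..S c}"
      using S_range by auto
    show "{1..S c} \<subseteq> S ` {c' \<in> D. S c' \<le> S c}"
    proof
      fix v assume "v \<in> {1..S c}"
      moreover from this have "v \<in> S ` D"
        using image_S S_range[OF \<open>c \<in> D\<close>] by auto
      ultimately show "v \<in> S ` {c' \<in> D. S c' \<le> S c}" by auto
    qed
  qed
  moreover have "inj_on S {c' \<in> D. S c' \<le> S c}"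
    using inj_on_S by (rule inj_on_subset) auto
  ultimately show ?thesis
    unfolding rank_def by (metis card_atLeastAtMost card_image diff_Suc_1)
qed

lemma descents_subset: "descents D S \<subseteq> {1..<card D}"
  by (auto simp: descents_def)

lemma finite_descents: "finite (descents D S)"
  using descents_subset by (rule finite_subset) simp

lemma descent_iff_row_less:
  assumes "1 \<le> d" "d < card D"
  shows "fst (cell_of D S (Suc d)) \<le> fst (cell_of D S d) \<longleftrightarrow>
    snd (cell_of D S d) < snd (cell_of D S (Suc d))"
proof -
  obtain a0 b0 where p0: "cell_of D S d = (a0, b0)" by fastforce
  obtain a1 b1 where p1: "cell_of D S (Suc d) = (a1, b1)" by fastforce
  have c0: "(a0, b0) \<in> D" "S (a0, b0) = d"
    using cell_of_mem[of d] S_cell_of[of d] assms p0 by auto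
  have c1: "(a1, b1) \<in> D" "S (a1, b1) = Suc d"
    using cell_of_mem[of "Suc d"] S_cell_of[of "Suc d"] assms p1 by auto
  have pos: "1 \<le> a0" "1 \<le> b0" "1 \<le> a1" "1 \<le> b1"
    using shape_pos c0(1) c1(1) by auto
  have "b0 < b1" if "a1 \<le> a0"
  proof (rule ccontr)
    assume "\<not> b0 < b1"
    then have in1: "(a1, b0) \<in> D"
      using shape_down_closed[OF c0(1)] pos \<open>a1 \<le> a0\<close> by simp
    have "S (a1, b1) \<le> S (a1, b0)"
      using S_col_less[OF c1(1) in1] \<open>\<not> b0 < b1\<close> by (cases "b1 = b0") auto
    also have "\<dots> \<le> S (a0, b0)" using S_row_le[OF in1 c0(1) \<open>a1 \<le> a0\<close>] .
    finally show False using c0 c1 by simp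
  qed
  moreover have "a1 \<le> a0" if "b0 < b1"
  proof (rule ccontr)
    assume "\<not> a1 \<le> a0"
    then have in1: "(a0, b1) \<in> D"
      using shape_down_closed[OF c1(1)] pos by simp
    have "S (a0, b0) < S (a0, b1)" using S_col_less[OF c0(1) in1 \<open>b0 < b1\<close>] .
    moreover have "S (a0, b1) < S (a1, b1)"
      using S_row_less[OF in1 c1(1)] \<open>\<not> a1 \<le> a0\<close> by simp
    ultimately show False using c0 c1 by simp
  qed
  ultimately show ?thesis using p0 p1 by auto
qed

lemma fst_cell_of_less_if_no_descents:
  assumes "1 \<le> a" "a < b" "b \<le> card D" "\<And>d. a \<le> d \<Longrightarrow> d < b \<Longrightarrow> d \<notin> descents D S"
  shows "fst (cell_of D S a) < fst (cell_of D S b)"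
  using assms
proof (induction b)
  case (Suc b)
  then have "b \<notin> descents D S" "1 \<le> b" "b < card D" by auto
  then have "fst (cell_of D S b) < fst (cell_of D S (Suc b))"
    by (auto simp: descents_def)
  with Suc show ?case by (cases "a = b") auto
qed simp

lemma std_key_destandardize_less:
  assumes "c \<in> D" "c' \<in> D" "S c' < S c"
  shows "std_key (destandardize D S) c' < std_key (destandardize D S) c"
proof -
  let ?below = "\<lambda>v. {d \<in> descents D S. d < v}"
  have sub: "?below (S c') \<subseteq> ?below (S c)" using assms(3) by auto
  have fin: "finite (?below (S c))" using finite_descents by simp
  show ?thesis
  proof (cases "card (?below (S c')) = card (?below (S c))")
    case True
    \<comment> \<open>No descent between \<open>S c'\<close> and \<open>S c\<close>, so the cells move strictly to the right.\<close>
    then have eq: "?below (S c') = ?below (S c)" using card_subset_eq[OF fin sub] by simp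
    have "d \<notin> descents D S" if "S c' \<le> d" "d < S c" for d
    proof
      assume "d \<in> descents D S"
      then have "d \<in> ?below (S c')" using that(2) unfolding eq by simp
      then show False using that(1) by simp
    qed
    then have "fst (cell_of D S (S c')) < fst (cell_of D S (S c))"
      using assms S_range by (intro fst_cell_of_less_if_no_descents) auto
    then show ?thesis
      using True assms by (simp add: cell_of_S std_key_def destandardize_def)
  next
    case False
    then show ?thesis
      using card_mono[OF fin sub] assms by (simp add: std_key_def destandardize_def)
  qed
qed

lemma standardize_destandardize: "standardize D (destandardize D S) = S"
proof
  fix c
  show "standardize D (destandardize D S) c = S c"
  proof (cases "c \<in> D")
    case True
    have "std_key (destandardize D S) c' \<le> std_key (destandardize D S) c \<longleftrightarrow> S c' \<le> S c"
      if "c' \<in> D" for c'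
      using std_key_destandardize_less[OF True that] std_key_destandardize_less[OF that True]
        inj_on_S True that
      by (metis inj_on_eq_iff le_less not_less linorder_neq_iff)
    then have "rank (std_key (destandardize D S)) D c = rank S D c"
      unfolding rank_def by (metis (lifting))
    then show ?thesis using True rank_S by (simp add: standardize_def)
  qed (simp add: standardize_def S_outside)
qed

lemma ssyt_destandardize: "ssyt D (destandardize D S)"
proof (rule ssytI)
  fix i i' j assume ij: "(i, j) \<in> D" "(i', j) \<in> D" "i \<le> i'"
  have "{d \<in> descents D S. d < S (i, j)} \<subseteq> {d \<in> descents D S. d < S (i', j)}"
    using S_row_le[OF ij] by auto
  then show "destandardize D S (i, j) \<le> destandardize D S (i', j)"
    using ij finite_descents by (simp add: destandardize_def card_mono)
next
  fix i j j' assume "(i, j) \<in> D" "(i, j') \<in> D" "j < j'"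
  then show "destandardize D S (i, j) < destandardize D S (i, j')"
    using std_key_destandardize_less[of "(i, j')" "(i, j)"] S_col_less
    by (simp add: std_key_def)
qed (simp_all add: destandardize_def)

lemma destandardize_cell_of:
  "1 \<le> v \<Longrightarrow> v \<le> card D \<Longrightarrow>
    destandardize D S (cell_of D S v) = Suc (card {d \<in> descents D S. d < v})"
  by (simp add: destandardize_def cell_of_mem S_cell_of)

lemma quasi_yamanouchi_destandardize: "quasi_yamanouchi_on D (destandardize D S)"
  unfolding quasi_yamanouchi_on_def
proof (intro conjI ssyt_destandardize ballI impI)
  let ?T = "destandardize D S"
  fix k assume "k \<in> ?T ` D" "1 < k"
  then obtain c where "c \<in> D" "k = ?T c" by auto
  define E where "E = {d \<in> descents D S. d < S c}"
  have k: "k = Suc (card E)" using \<open>c \<in> D\<close> \<open>k = ?T c\<close> by (simp add: destandardize_def E_def)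
  have "finite E" using finite_descents by (simp add: E_def)
  moreover have "E \<noteq> {}" using k \<open>1 < k\<close> by auto
  \<comment> \<open>The largest descent \<open>d\<close> below \<open>S c\<close>: the cell of \<open>d + 1\<close> carries \<open>k\<close>,
    the cell of \<open>d\<close> carries \<open>k - 1\<close> and lies weakly to its right.\<close>
  moreover define d where "d = Max E"
  ultimately have "d \<in> E" and d_max: "\<And>x. x \<in> E \<Longrightarrow> x \<le> d" by simp_all
  have d: "d \<in> descents D S" "Suc (card (E - {d})) = card E"
    using \<open>d \<in> E\<close> card_Suc_Diff1[OF \<open>finite E\<close> \<open>d \<in> E\<close>] by (simp_all add: E_def)
  have below_Suc: "{d' \<in> descents D S. d' < Suc d} = E"
    using d_max \<open>d \<in> E\<close> by (force simp: E_def)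
  then have below: "{d' \<in> descents D S. d' < d} = E - {d}" by auto
  have range: "1 \<le> d" "Suc d \<le> card D" using d(1) descents_subset by auto
  let ?p0 = "cell_of D S d" and ?p1 = "cell_of D S (Suc d)"
  have "?p0 \<in> D" "?T ?p0 = k - 1"
    using range d(2) k below cell_of_mem destandardize_cell_of by auto
  moreover have "leftmost_column D ?T k \<le> fst ?p1"
    using range below_Suc k cell_of_mem[of "Suc d"] destandardize_cell_of[of "Suc d"]
    by (intro leftmost_column_le[OF finite_shape, of _ "snd ?p1"]) auto
  moreover have "fst ?p1 \<le> fst ?p0" using d(1) by (simp add: descents_def)
  ultimately show "\<exists>(i', j')\<in>D. ?T (i', j') = k - 1 \<and> leftmost_column D ?T k \<le> i'"
    by (intro bexI[of _ ?p0]) auto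
qed

lemma destandardize_in_QYT:
  assumes "D \<noteq> {}"
  shows "destandardize D S \<in> QYT D (int (card (descents D S)) + 1)"
proof -
  have n: "1 \<le> card D" using assms finite_shape by (simp add: Suc_le_eq card_gt_0_iff)
  have "{d \<in> descents D S. d < card D} = descents D S" using descents_subset by auto
  then have "destandardize D S (cell_of D S (card D)) = Suc (card (descents D S))"
    using destandardize_cell_of[OF n] by simp
  then have "\<exists>c\<in>D. int (destandardize D S c) = int (card (descents D S)) + 1"
    using cell_of_mem[OF n] by force
  moreover have "\<forall>c\<in>D. int (destandardize D S c) \<le> int (card (descents D S)) + 1"
    using finite_descents by (auto simp: destandardize_def intro: card_mono)
  ultimately show ?thesis
    unfolding QYT_def using quasi_yamanouchi_destandardize by blast
qed

end

locale qy_tableau = young_shape +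
  fixes T :: "nat \<times> nat \<Rightarrow> nat" and m :: int
  assumes T_in_QYT: "T \<in> QYT D m"

lemma (in young_shape) qy_tableauI: "T \<in> QYT D m \<Longrightarrow> qy_tableau D T m"
  by (simp add: qy_tableau_def qy_tableau_axioms_def young_shape_axioms)

context qy_tableau
begin

lemma quasi_yamanouchi_T: "quasi_yamanouchi_on D T"
  using T_in_QYT by (simp add: QYT_def)

lemma T_outside: "c \<notin> D \<Longrightarrow> T c = 0"
  using quasi_yamanouchi_T unfolding quasi_yamanouchi_on_def ssyt_def by blast

lemma T_pos: "c \<in> D \<Longrightarrow> 0 < T c"
  using quasi_yamanouchi_T by (simp add: quasi_yamanouchi_on_def ssyt_def)

lemma T_row_le: "(i, j) \<in> D \<Longrightarrow> (i', j) \<in> D \<Longrightarrow> i \<le> i' \<Longrightarrow> T (i, j) \<le> T (i', j)"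
  using quasi_yamanouchi_T by (simp add: quasi_yamanouchi_on_def ssyt_def)

lemma T_col_less: "(i, j) \<in> D \<Longrightarrow> (i, j') \<in> D \<Longrightarrow> j < j' \<Longrightarrow> T (i, j) < T (i, j')"
  using quasi_yamanouchi_T by (simp add: quasi_yamanouchi_on_def ssyt_def)

lemma T_le_max: "c \<in> D \<Longrightarrow> int (T c) \<le> m"
  using T_in_QYT by (simp add: QYT_def)

lemma T_predecessor:
  assumes "c \<in> D" "1 < T c"
  obtains i' j' where "(i', j') \<in> D" "T (i', j') = T c - 1" "leftmost_column D T (T c) \<le> i'"
  using quasi_yamanouchi_T assms unfolding quasi_yamanouchi_on_def by blast

lemma entry_exists: "1 \<le> k \<Longrightarrow> int k \<le> m \<Longrightarrow> \<exists>c\<in>D. T c = k"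
proof (induction "nat m - k" arbitrary: k)
  case 0
  then have "int k = m" by simp
  then show ?case using T_in_QYT by (auto simp: QYT_def)
next
  case (Suc n)
  then have "n = nat m - Suc k" "int (Suc k) \<le> m" by linarith+
  then obtain c where "c \<in> D" "T c = Suc k" using Suc.hyps(1)[of "Suc k"] by auto
  moreover have "1 < T c" using \<open>T c = Suc k\<close> Suc.prems(1) by simp
  ultimately show ?case by (metis T_predecessor diff_Suc_1)
qed

lemma inj_on_std_key: "inj_on (std_key T) D"
proof (rule inj_onI)
  fix c c' assume "c \<in> D" "c' \<in> D" "std_key T c = std_key T c'"
  moreover obtain i j j' where "c = (i, j)" "c' = (i, j')" "T (i, j) = T (i, j')"
    using \<open>std_key T c = std_key T c'\<close> by (cases c, cases c') (auto simp: std_key_def)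
  ultimately show "c = c'"
    using T_col_less[of i j j'] T_col_less[of i j' j] by (metis less_irrefl linorder_neqE_nat)
qed

abbreviation S :: "nat \<times> nat \<Rightarrow> nat" where
  "S \<equiv> standardize D T"

lemma standardize_le_iff: "c \<in> D \<Longrightarrow> c' \<in> D \<Longrightarrow> S c \<le> S c' \<longleftrightarrow> std_key T c \<le> std_key T c'"
  by (simp add: standardize_def rank_le_rank_iff finite_shape)

lemma standardize_less_iff: "c \<in> D \<Longrightarrow> c' \<in> D \<Longrightarrow> S c < S c' \<longleftrightarrow> std_key T c < std_key T c'"
  by (simp add: standardize_def rank_less_rank_iff finite_shape)

lemma syt_standardize: "syt D S"
proof -
  have image: "S ` D = {1..card D}"
    using bij_betw_rank[OF finite_shape inj_on_std_key]
    by (simp add: bij_betw_def standardize_def cong: image_cong)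
  have "ssyt D S"
  proof (rule ssytI)
    fix c assume "c \<in> D"
    then show "0 < S c" using image by fastforce
  next
    fix i i' j assume "(i, j) \<in> D" "(i', j) \<in> D" "i \<le> i'"
    then show "S (i, j) \<le> S (i', j)"
      using T_row_le by (simp add: standardize_le_iff std_key_def)
  next
    fix i j j' assume "(i, j) \<in> D" "(i, j') \<in> D" "j < j'"
    then show "S (i, j) < S (i, j')"
      using T_col_less by (simp add: standardize_less_iff std_key_def)
  qed (simp add: standardize_def)
  with image show ?thesis by (simp add: syt_def)
qed

sublocale std: standard_tableau D S
  by unfold_locales (rule syt_standardize)

lemma shape_nonempty: "D \<noteq> {}"
  using T_in_QYT by (auto simp: QYT_def)

lemma T_cell_of_Suc_bounds:
  assumes "1 \<le> v" "v < card D"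
  shows "T (cell_of D S v) \<le> T (cell_of D S (Suc v))"
    and "T (cell_of D S (Suc v)) \<le> Suc (T (cell_of D S v))"
proof -
  let ?c0 = "cell_of D S v" and ?c1 = "cell_of D S (Suc v)"
  have c: "?c0 \<in> D" "?c1 \<in> D" "S ?c0 = v" "S ?c1 = Suc v"
    using assms std.cell_of_mem std.S_cell_of by auto
  then have "std_key T ?c0 < std_key T ?c1" using standardize_less_iff[OF c(1,2)] by simp
  then show "T ?c0 \<le> T ?c1" by (auto simp: std_key_def)
  show "T ?c1 \<le> Suc (T ?c0)"
  proof (rule ccontr)
    assume gap: "\<not> T ?c1 \<le> Suc (T ?c0)"
    \<comment> \<open>The entry \<open>T ?c0 + 1\<close> occurs, and its cell would lie strictly between \<open>v\<close> and \<open>v + 1\<close>.\<close>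
    then obtain c where "c \<in> D" "T c = Suc (T ?c0)"
      using entry_exists[of "Suc (T ?c0)"] T_le_max[OF c(2)] by force
    with gap have "std_key T ?c0 < std_key T c" "std_key T c < std_key T ?c1"
      by (auto simp: std_key_def)
    then have "v < S c" "S c < Suc v"
      using standardize_less_iff[OF c(1) \<open>c \<in> D\<close>] standardize_less_iff[OF \<open>c \<in> D\<close> c(2)] c
      by simp_all
    then show False by simp
  qed
qed

lemma descent_iff_T_cell_of_Suc:
  assumes "1 \<le> v" "v < card D"
  shows "v \<in> descents D S \<longleftrightarrow> T (cell_of D S (Suc v)) = Suc (T (cell_of D S v))"
proof -
  let ?c0 = "cell_of D S v" and ?c1 = "cell_of D S (Suc v)"
  have c: "?c0 \<in> D" "?c1 \<in> D" "S ?c0 = v" "S ?c1 = Suc v"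
    using assms std.cell_of_mem std.S_cell_of by auto
  then have key01: "std_key T ?c0 < std_key T ?c1" using standardize_less_iff[OF c(1,2)] by simp
  show ?thesis
  proof
    assume "v \<in> descents D S"
    then have "fst ?c1 \<le> fst ?c0" by (simp add: descents_def)
    with key01 have "T ?c0 \<noteq> T ?c1" by (auto simp: std_key_def)
    then show "T ?c1 = Suc (T ?c0)" using T_cell_of_Suc_bounds[OF assms] by simp
  next
    assume entry: "T ?c1 = Suc (T ?c0)"
    then obtain i' j' where ij: "(i', j') \<in> D" "T (i', j') = T ?c0"
      and left: "leftmost_column D T (T ?c1) \<le> i'"
      using T_predecessor[OF c(2)] T_pos[OF c(1)] by auto
    have "fst ?c1 \<le> leftmost_column D T (T ?c1)"
    proof (rule le_leftmost_column[OF finite_shape, of "fst ?c1" "snd ?c1"])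
      fix a b assume ab: "(a, b) \<in> D" "T (a, b) = T ?c1"
      then have "S ?c0 < S (a, b)"
        using entry standardize_less_iff[OF c(1) ab(1)] by (simp add: std_key_def)
      then have "std_key T ?c1 \<le> std_key T (a, b)"
        using c standardize_le_iff[OF c(2) ab(1)] by simp
      then show "fst ?c1 \<le> a" using ab(2) by (simp add: std_key_def)
    qed (use c(2) in simp_all)
    moreover have "i' \<le> fst ?c0"
    proof -
      have "S (i', j') < S ?c1"
        using entry ij standardize_less_iff[OF ij(1) c(2)] by (simp add: std_key_def)
      then have "std_key T (i', j') \<le> std_key T ?c0"
        using c standardize_le_iff[OF ij(1) c(1)] by simp
      then show ?thesis using ij(2) by (simp add: std_key_def)
    qed
    ultimately show "v \<in> descents D S"
      using left assms by (simp add: descents_def)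
  qed
qed

lemma T_first_cell: "T (cell_of D S 1) = 1"
proof -
  have n: "1 \<le> card D" using shape_nonempty finite_shape by (simp add: Suc_le_eq card_gt_0_iff)
  obtain c where "c \<in> D" "T c = 1"
    using entry_exists[of 1] shape_nonempty T_pos T_le_max by force
  moreover have "S (cell_of D S 1) \<le> S c"
    using std.S_cell_of[OF _ n] std.S_range[OF \<open>c \<in> D\<close>] by simp
  ultimately show ?thesis
    using standardize_le_iff[OF std.cell_of_mem[OF _ n] \<open>c \<in> D\<close>] T_pos[OF std.cell_of_mem[OF _ n]]
    by (simp add: std_key_def)
qed

lemma T_cell_of: "1 \<le> v \<Longrightarrow> v \<le> card D \<Longrightarrow> T (cell_of D S v) = Suc (card {d \<in> descents D S. d < v})"
proof (induction v)
  case (Suc v)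
  show ?case
  proof (cases "v = 0")
    case True
    then show ?thesis using T_first_cell by (simp add: descents_def)
  next
    case False
    with Suc have v: "1 \<le> v" "v < card D" and IH: "T (cell_of D S v) = Suc (card {d \<in> descents D S. d < v})"
      by auto
    show ?thesis
    proof (cases "v \<in> descents D S")
      case True
      then have "{d \<in> descents D S. d < Suc v} = insert v {d \<in> descents D S. d < v}" by auto
      then show ?thesis
        using True IH descent_iff_T_cell_of_Suc[OF v] std.finite_descents by simp
    next
      case False
      then have "{d \<in> descents D S. d < Suc v} = {d \<in> descents D S. d < v}" by (auto simp: less_Suc_eq)
      then show ?thesis
        using False IH descent_iff_T_cell_of_Suc[OF v] T_cell_of_Suc_bounds[OF v] by simp
    qed
  qed
qed simp

lemma destandardize_standardize: "destandardize D S = T"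
proof
  fix c
  show "destandardize D S c = T c"
  proof (cases "c \<in> D")
    case True
    then show ?thesis
      using T_cell_of[of "S c"] std.S_range std.cell_of_S by (simp add: destandardize_def)
  qed (simp add: destandardize_def T_outside)
qed

lemma card_descents_standardize: "int (card (descents D S)) + 1 = m"
proof -
  have n: "1 \<le> card D" using shape_nonempty finite_shape by (simp add: Suc_le_eq card_gt_0_iff)
  let ?last = "cell_of D S (card D)"
  have last: "?last \<in> D" "S ?last = card D" using std.cell_of_mem std.S_cell_of n by auto
  have "{d \<in> descents D S. d < card D} = descents D S" using std.descents_subset by auto
  then have T_last: "T ?last = Suc (card (descents D S))" using T_cell_of[OF n] by simp
  obtain c where "c \<in> D" "int (T c) = m" using T_in_QYT by (auto simp: QYT_def)
  then have "std_key T c \<le> std_key T ?last"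
    using last std.S_range standardize_le_iff[OF _ last(1)] by simp
  then have "T c \<le> T ?last" by (auto simp: std_key_def)
  with \<open>int (T c) = m\<close> T_le_max[OF last(1)] T_last show ?thesis by simp
qed

end

section \<open>Transposition\<close>

context standard_tableau
begin

lemma syt_transpose: "syt (prod.swap ` D) (S \<circ> prod.swap)"
proof -
  have "ssyt (prod.swap ` D) (S \<circ> prod.swap)"
  proof (rule ssytI)
    fix c assume "c \<notin> prod.swap ` D"
    then have "prod.swap c \<notin> D" by (metis image_eqI swap_swap)
    then show "(S \<circ> prod.swap) c = 0" by (simp add: S_outside)
  next
    fix c assume "c \<in> prod.swap ` D"
    then show "0 < (S \<circ> prod.swap) c" using S_range by fastforce
  next
    fix i i' j assume "(i, j) \<in> prod.swap ` D" "(i', j) \<in> prod.swap ` D" "i \<le> i'"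
    then show "(S \<circ> prod.swap) (i, j) \<le> (S \<circ> prod.swap) (i', j)"
      using S_col_less[of j i i'] by (cases "i = i'") simp_all
  next
    fix i j j' assume "(i, j) \<in> prod.swap ` D" "(i, j') \<in> prod.swap ` D" "j < j'"
    then show "(S \<circ> prod.swap) (i, j) < (S \<circ> prod.swap) (i, j')"
      using S_row_less[of j i j'] by simp
  qed
  moreover have "(S \<circ> prod.swap) ` prod.swap ` D = S ` D" by (simp add: image_comp)
  ultimately show ?thesis using image_S by (simp add: syt_def card_image)
qed

lemma cell_of_transpose:
  assumes "1 \<le> v" "v \<le> card D"
  shows "cell_of (prod.swap ` D) (S \<circ> prod.swap) v = prod.swap (cell_of D S v)"
proof -
  interpret transpose: standard_tableau "prod.swap ` D" "S \<circ> prod.swap"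
    using syt_transpose by (rule young_shape.standard_tableauI[OF young_shape_transpose])
  show ?thesis
    using transpose.cell_of_S[of "prod.swap (cell_of D S v)"] cell_of_mem S_cell_of assms by simp
qed

lemma descents_transpose:
  "descents (prod.swap ` D) (S \<circ> prod.swap) = {1..<card D} - descents D S"
proof (rule set_eqI)
  fix d
  show "d \<in> descents (prod.swap ` D) (S \<circ> prod.swap) \<longleftrightarrow> d \<in> {1..<card D} - descents D S"
  proof (cases "1 \<le> d \<and> d < card D")
    case True
    then have "d \<in> descents (prod.swap ` D) (S \<circ> prod.swap) \<longleftrightarrow>
        snd (cell_of D S (Suc d)) \<le> snd (cell_of D S d)"
      by (simp add: descents_def card_image cell_of_transpose)
    also have "\<dots> \<longleftrightarrow> \<not> fst (cell_of D S (Suc d)) \<le> fst (cell_of D S d)"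
      using descent_iff_row_less True by auto
    finally show ?thesis using True by (simp add: descents_def)
  qed (auto simp: descents_def card_image)
qed

lemma card_descents_transpose:
  "card (descents (prod.swap ` D) (S \<circ> prod.swap)) = card D - 1 - card (descents D S)"
  using descents_subset by (simp add: descents_transpose card_Diff_subset finite_descents)

lemma descent_count_transpose:
  assumes "D \<noteq> {}"
  shows "int (card (descents (prod.swap ` D) (S \<circ> prod.swap))) + 1 =
    int (card D) + 1 - (int (card (descents D S)) + 1)"
proof -
  have "card (descents D S) \<le> card D - 1" "1 \<le> card D"
    using card_mono[OF _ descents_subset] assms finite_shape by (auto simp: Suc_le_eq card_gt_0_iff)
  then show ?thesis using card_descents_transpose by linarith
qed

end

text \<open>Standard tableaux indexed, like \<open>QYT D m\<close>, by one more than their number of descents.\<close>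

definition SYT_by_descents :: "(nat \<times> nat) set \<Rightarrow> int \<Rightarrow> (nat \<times> nat \<Rightarrow> nat) set" where
  "SYT_by_descents D m = {S. syt D S \<and> int (card (descents D S)) + 1 = m}"

lemma (in young_shape) card_QYT_eq_card_SYT_by_descents:
  assumes "D \<noteq> {}"
  shows "card (QYT D m) = card (SYT_by_descents D m)"
proof -
  have "bij_betw (destandardize D) (SYT_by_descents D m) (QYT D m)"
  proof (rule bij_betw_byWitness[where f' = "standardize D"])
    show "\<forall>S\<in>SYT_by_descents D m. standardize D (destandardize D S) = S"
      using standard_tableau.standardize_destandardize standard_tableauI
      by (auto simp: SYT_by_descents_def)
    show "\<forall>T\<in>QYT D m. destandardize D (standardize D T) = T"
      using qy_tableau.destandardize_standardize qy_tableauI by blast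
    show "destandardize D ` SYT_by_descents D m \<subseteq> QYT D m"
      using standard_tableau.destandardize_in_QYT[OF standard_tableauI assms]
      by (auto simp: SYT_by_descents_def)
    show "standardize D ` QYT D m \<subseteq> SYT_by_descents D m"
      using qy_tableau.syt_standardize qy_tableau.card_descents_standardize qy_tableauI
      by (fastforce simp: SYT_by_descents_def)
  qed
  then show ?thesis by (simp add: bij_betw_same_card)
qed

lemma (in young_shape) transpose_mem_SYT_by_descents:
  assumes "S \<in> SYT_by_descents D m" "D \<noteq> {}"
  shows "S \<circ> prod.swap \<in> SYT_by_descents (prod.swap ` D) (int (card D) + 1 - m)"
proof -
  interpret standard_tableau D S
    using assms(1) by (simp add: SYT_by_descents_def standard_tableauI)
  show ?thesis
    using assms syt_transpose descent_count_transpose by (simp add: SYT_by_descents_def)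
qed

lemma (in young_shape) card_SYT_by_descents_transpose:
  assumes "D \<noteq> {}"
  shows "card (SYT_by_descents D m) =
    card (SYT_by_descents (prod.swap ` D) (int (card D) + 1 - m))"
proof -
  interpret transpose: young_shape "prod.swap ` D" by (rule young_shape_transpose)
  have "prod.swap ` prod.swap ` D = D" "card (prod.swap ` D) = card D"
    by (simp_all add: image_comp card_image)
  then have "bij_betw (\<lambda>S. S \<circ> prod.swap) (SYT_by_descents D m)
      (SYT_by_descents (prod.swap ` D) (int (card D) + 1 - m))"
    using transpose_mem_SYT_by_descents assms
      transpose.transpose_mem_SYT_by_descents[of _ "int (card D) + 1 - m"]
    by (intro bij_betw_byWitness[where f' = "\<lambda>S. S \<circ> prod.swap"]) (auto simp: comp_assoc)
  then show ?thesis by (rule bij_betw_same_card)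
qed

lemma (in young_shape) card_QYT_transpose:
  "card (QYT D m) = card (QYT (prod.swap ` D) (int (card D) + 1 - m))"
proof (cases "D = {}")
  case False
  interpret transpose: young_shape "prod.swap ` D" by (rule young_shape_transpose)
  show ?thesis
    using card_QYT_eq_card_SYT_by_descents card_SYT_by_descents_transpose
      transpose.card_QYT_eq_card_SYT_by_descents False
    by simp
qed (simp add: QYT_def)

theorem theorem3p3:
  fixes lam :: "nat list" and n :: nat and m :: int
  assumes "partition_of lam n"
  shows "card (QYT_eq m lam) = card (QYT_eq (int n + 1 - m) (conj_part lam))"
proof -
  have "is_partition lam" and "card (diagram lam) = n"
    using assms card_diagram by (auto simp: partition_of_def)
  then show ?thesis
    using young_shape.card_QYT_transpose[OF young_shape_diagram, of lam m]
    by (simp add: QYT_eq_eq_QYT_diagram diagram_conj_part)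
qed

end
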